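(* Consider MALIQUOT. Then, for all $n$, $\mathcal{SG}(n) = \Omega(n)$.
   Context: MALIQUOT is the impartial normal-play game whose positions are the positive integers, where from $n$ a player moves to a proper divisor of $n$, i.e. $\mathrm{opt}(n)=\{d: d\mid n,\ 0<d<n\}$; the player unable to move loses. $\mathcal{SG}$ denotes the Sprague-Grundy (nim-)value, $\mathcal{SG}(n)=\mathrm{mex}\{\mathcal{SG}(x):x\in\mathrm{opt}(n)\}$. $\Omega(n)$ is the number of prime factors of $n$ counted with multiplicity. *)

theory Defs
  imports Main "HOL-Computational_Algebra.Primes"
begin

definition maliquot_opt :: "nat \<Rightarrow> nat set" where
  "maliquot_opt n = {d. d dvd n \<and> 0 < d \<and> d < n}"

definition mex :: "nat set \<Rightarrow> nat" where
  "mex S = (LEAST m. m \<notin> S)"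

function SG :: "nat \<Rightarrow> nat" where
  "SG n = mex ((\<lambda>d. if d < n then SG d else 0) ` maliquot_opt n)"
  by auto
termination by (relation "measure id") auto

definition bigOmega :: "nat \<Rightarrow> nat" where
  "bigOmega n = size (prime_factorization n)"

end

theory Submission
  imports Defs
begin

(* The proper divisors of n are exactly the numbers whose prime factorizations are proper
   submultisets of that of n. Hence Omega is strictly smaller on every option of n, and every
   value below Omega n is attained by some option (multiply together that many of the prime
   factors of n). By induction the options of n carry the SG values 0, ..., Omega n - 1,
   whose mex is Omega n. *)

lemma submset_of_size:
  assumes "k \<le> size (M :: 'a multiset)"
  shows "\<exists>N. N \<subseteq># M \<and> size N = k"
  using assms
proof (induction M)
  case empty
  then show ?case by simp
next
  case (add x M)
  show ?case
  proof (cases "k \<le> size M")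
    case True
    then obtain N where "N \<subseteq># M" "size N = k"
      using add.IH by blast
    moreover have "M \<subseteq># add_mset x M"
      by simp
    ultimately show ?thesis
      using subset_mset.order_trans by blast
  next
    case False
    then have "size (add_mset x M) = k"
      using add.prems by simp
    then show ?thesis
      by blast
  qed
qed

lemma bigOmega_less_of_proper_dvd:
  fixes d n :: nat
  assumes "d dvd n" "d < n"
  shows "bigOmega d < bigOmega n"
proof -
  have "n \<noteq> 0" "d \<noteq> 0"
    using assms by auto
  then have subset: "prime_factorization d \<subseteq># prime_factorization n"
    using assms(1) by (simp add: prime_factorization_subset_iff_dvd)
  have "prime_factorization d \<noteq> prime_factorization n"
    using \<open>n \<noteq> 0\<close> \<open>d \<noteq> 0\<close> assms(2) prime_factorization_unique[of d n] by auto
  with subset show ?thesis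
    unfolding bigOmega_def by (simp add: mset_subset_size)
qed

lemma proper_dvd_with_bigOmega:
  fixes n :: nat
  assumes "0 < n" "k < bigOmega n"
  obtains d where "d dvd n" "d < n" "bigOmega d = k"
proof -
  obtain N where N: "N \<subseteq># prime_factorization n" "size N = k"
    using submset_of_size[of k "prime_factorization n"] assms(2)
    unfolding bigOmega_def by (meson less_imp_le)
  define d where "d = prod_mset N"
  have primes: "\<And>p. p \<in># N \<Longrightarrow> prime p"
    using N(1) by (meson in_prime_factors_imp_prime mset_subset_eqD)
  then have factorization: "prime_factorization d = N"
    unfolding d_def by (rule prime_factorization_prod_mset_primes)
  have "d \<noteq> 0"
    unfolding d_def using primes by (metis not_prime_0 prod_mset_zero_iff)
  then have "d dvd n"
    using N(1) factorization by (simp add: prime_factorization_subset_imp_dvd)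
  moreover have "d \<noteq> n"
    using N(2) factorization assms(2) unfolding bigOmega_def by auto
  moreover have "d \<le> n"
    using \<open>d dvd n\<close> assms(1) by (rule dvd_imp_le)
  moreover have "bigOmega d = k"
    using N(2) factorization by (simp add: bigOmega_def)
  ultimately show thesis
    using that by simp
qed

lemma bigOmega_image_maliquot_opt:
  assumes "0 < n"
  shows "bigOmega ` maliquot_opt n = {..<bigOmega n}"
proof (intro equalityI subsetI)
  fix k
  assume "k \<in> bigOmega ` maliquot_opt n"
  then show "k \<in> {..<bigOmega n}"
    unfolding maliquot_opt_def using bigOmega_less_of_proper_dvd by auto
next
  fix k
  assume "k \<in> {..<bigOmega n}"
  then obtain d where "d dvd n" "d < n" "bigOmega d = k"
    using proper_dvd_with_bigOmega assms by blast
  moreover from this have "d \<in> maliquot_opt n"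
    using assms unfolding maliquot_opt_def by (auto intro: dvd_pos_nat)
  ultimately show "k \<in> bigOmega ` maliquot_opt n"
    by blast
qed

lemma mex_lessThan: "mex {..<m} = m"
  unfolding mex_def by (rule Least_equality) auto

declare SG.simps [simp del]

lemma SG_eq_mex_SG_opt: "SG n = mex (SG ` maliquot_opt n)"
proof -
  have "(\<lambda>d. if d < n then SG d else 0) ` maliquot_opt n = SG ` maliquot_opt n"
    unfolding maliquot_opt_def by (rule image_cong) auto
  then show ?thesis
    by (subst SG.simps) (simp only:)
qed

theorem mainTheorem1:
  fixes n :: nat
  assumes "0 < n"
  shows "SG n = bigOmega n"
  using assms
proof (induction n rule: less_induct)
  case (less n)
  have "SG ` maliquot_opt n = bigOmega ` maliquot_opt n"
    using less.IH unfolding maliquot_opt_def by (intro image_cong) auto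
  then show ?case
    using SG_eq_mex_SG_opt[of n] bigOmega_image_maliquot_opt[OF less.prems]
    by (simp add: mex_lessThan)
qed

end
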